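(* Let $A$ be an $H$-supralgebra on $\mathbb{R}^N$ which is translation invariant and each of whose elements is uniformly continuous. Then the translations $x\mapsto x+y$ of $\mathbb{R}^N$ extend to a group of homeomorphisms $T(y):\Delta(A)\to\Delta(A)$, $y\in\mathbb{R}^N$, characterized by $\mathcal{G}(u(\cdot+y))(s)=\mathcal{G}(u)(T(y)s)$ for all $u\in A$, $s\in\Delta(A)$, and $\{T(y):y\in\mathbb{R}^N\}$ is a continuous $N$-dimensional dynamical system on $\Delta(A)$ whose invariant probability measure is the $M$-measure $\beta$ for $A$ (i.e. $\beta(T(y)F)=\beta(F)$ for every Borel set $F\subset\Delta(A)$ and every $y\in\mathbb{R}^N$).
   Context: $\mathcal{B}(\mathbb{R}^N)$ is the $C^*$-algebra of bounded continuous complex functions on $\mathbb{R}^N$ with the sup norm. A function $u\in\mathcal{B}(\mathbb{R}^N)$ has mean value $M(u)$ if $u(\cdot/t)\to M(u)$ weakly-* in $L^\infty(\mathbb{R}^N)$ as $t\to0^+$. An $H$-supralgebra on $\mathbb{R}^N$ is a closed subalgebra $A$ of $\mathcal{B}(\mathbb{R}^N)$ containing the constants, closed under complex conjugation, all of whose elements have a mean value. $\Delta(A)$ is the spectrum of $A$ (the set of nonzero multiplicative linear functionals on $A$ with the relative weak-* topology; it is compact), $\mathcal{G}:A\to\mathcal{C}(\Delta(A))$, $\mathcal{G}(u)(s)=s(u)$, is the Gelfand transformation (an isometric $*$-isomorphism), and the $M$-measure $\beta$ is the Radon probability measure on $\Delta(A)$ with $M(u)=\int_{\Delta(A)}\mathcal{G}(u)d\beta$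 for all $u\in A$. A continuous $N$-dimensional dynamical system on a compact space $K$ is a family of maps $T(y):K\to K$, $y\in\mathbb{R}^N$, with $T(0)=\mathrm{id}_K$, $T(x+y)=T(x)\circ T(y)$, and $(y,s)\mapsto T(y)s$ continuous from $\mathbb{R}^N\times K$ to $K$. *)

theory Defs
  imports "HOL-Analysis.Analysis"
begin

text \<open>The algebra B(R^N) of bounded continuous complex functions on R^N
  (R^N is rendered as an arbitrary euclidean_space type 'a).\<close>
definition bcontinuous :: "('a::euclidean_space \<Rightarrow> complex) set" where
  "bcontinuous = {u. continuous_on UNIV u \<and> bounded (range u)}"

text \<open>u has mean value m: u(x/t) tends to m weakly-* in L-infinity as t tends to 0+,
  i.e. tested against every Lebesgue integrable (L^1) function.\<close>
definition has_mean_value :: "('a::euclidean_space \<Rightarrow> complex) \<Rightarrow> complex \<Rightarrow> bool" where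
  "has_mean_value u m \<longleftrightarrow>
     (\<forall>\<phi>::'a \<Rightarrow> complex. integrable lebesgue \<phi> \<longrightarrow>
        ((\<lambda>t::real. LINT x|lebesgue. u (inverse t *\<^sub>R x) * \<phi> x)
          \<longlongrightarrow> m * (LINT x|lebesgue. \<phi> x)) (at_right 0))"

definition mean_value :: "('a::euclidean_space \<Rightarrow> complex) \<Rightarrow> complex" where
  "mean_value u = (THE m. has_mean_value u m)"

definition H_supralgebra :: "('a::euclidean_space \<Rightarrow> complex) set \<Rightarrow> bool" where
  "H_supralgebra A \<longleftrightarrow>
     A \<subseteq> bcontinuous \<and>
     (\<forall>c. (\<lambda>_. c) \<in> A) \<and>
     (\<forall>u\<in>A. \<forall>v\<in>A. (\<lambda>x. u x + v x) \<in> A \<and> (\<lambda>x. u x * v x) \<in> A) \<and>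
     (\<forall>c. \<forall>u\<in>A. (\<lambda>x. c * u x) \<in> A) \<and>
     (\<forall>u\<in>A. (\<lambda>x. cnj (u x)) \<in> A) \<and>
     (\<forall>f u. (\<forall>n. f n \<in> A) \<and> uniform_limit UNIV f u sequentially \<longrightarrow> u \<in> A) \<and>
     (\<forall>u\<in>A. \<exists>m. has_mean_value u m)"

text \<open>The spectrum Delta(A): nonzero multiplicative linear functionals on A
  (made extensional: value undefined outside A).  The Gelfand transform of u
  is simply the evaluation s \<mapsto> s u.\<close>
definition gelfand_spectrum ::
  "('a::euclidean_space \<Rightarrow> complex) set \<Rightarrow> (('a \<Rightarrow> complex) \<Rightarrow> complex) set" where
  "gelfand_spectrum A =
     {s. (\<forall>u\<in>A. \<forall>v\<in>A. s (\<lambda>x. u x + v x) = s u + s v \<and> s (\<lambda>x. u x * v x) = s u * s v) \<and>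
         (\<forall>c. \<forall>u\<in>A. s (\<lambda>x. c * u x) = c * s u) \<and>
         (\<exists>u\<in>A. s u \<noteq> 0) \<and>
         (\<forall>u. u \<notin> A \<longrightarrow> s u = undefined)}"

text \<open>Relative weak-* topology = topology of pointwise convergence on A.\<close>
definition spectrum_topology ::
  "('a::euclidean_space \<Rightarrow> complex) set \<Rightarrow> (('a \<Rightarrow> complex) \<Rightarrow> complex) topology" where
  "spectrum_topology A =
     subtopology (product_topology (\<lambda>_. euclidean) A) (gelfand_spectrum A)"

definition M_measure ::
  "('a::euclidean_space \<Rightarrow> complex) set \<Rightarrow> (('a \<Rightarrow> complex) \<Rightarrow> complex) measure \<Rightarrow> bool" where
  "M_measure A \<beta> \<longleftrightarrow>
     space \<beta> = gelfand_spectrum A \<and>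
     sets \<beta> = sigma_sets (gelfand_spectrum A) {U. openin (spectrum_topology A) U} \<and>
     emeasure \<beta> (space \<beta>) = 1 \<and>
     (\<forall>F\<in>sets \<beta>. emeasure \<beta> F =
        (SUP K\<in>{K. compactin (spectrum_topology A) K \<and> K \<subseteq> F}. emeasure \<beta> K)) \<and>
     (\<forall>u\<in>A. mean_value u = (LINT s|\<beta>. s u))"

definition dynamical_system :: "'s topology \<Rightarrow> ('a::euclidean_space \<Rightarrow> 's \<Rightarrow> 's) \<Rightarrow> bool" where
  "dynamical_system X T \<longleftrightarrow>
     compact_space X \<and>
     (\<forall>y. T y ` topspace X \<subseteq> topspace X) \<and>
     (\<forall>s\<in>topspace X. T 0 s = s) \<and>
     (\<forall>x y. \<forall>s\<in>topspace X. T (x + y) s = T x (T y s)) \<and>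
     continuous_map (prod_topology euclidean X) X (\<lambda>(y, s). T y s)"

end

theory Submission
  imports Defs
begin

text \<open>Every character s of A satisfies |s u| \<le> sup |u|, because \<open>\<lambda> - u\<close> is invertible in the
  closed algebra A by the Neumann series as soon as |\<lambda>| > sup |u|. Hence the spectrum is a
  closed subset of a product of discs and compact. Translation invariance of A lets
  \<open>T(y) s = s (u(\<cdot> + y))\<close> act on characters; the group law is immediate, and uniform
  continuity of the elements of A gives joint continuity.

  For the invariance of \<open>\<beta>\<close>: mean values are translation invariant, so the image of \<open>\<beta>\<close>
  under T(-y) is again an M-measure, and M-measures are unique. Uniqueness uses a continuous
  functional calculus for real elements (Weierstrass approximation): it yields Gelfand
  transforms with values in [0, 1] separating disjoint compact sets, so two M-measures agree on
  compact sets, hence everywhere by inner regularity.\<close>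

lemma uniform_limit_of_dist_le:
  assumes "\<And>n x. x \<in> S \<Longrightarrow> dist (f n x) (g x) \<le> e n" and "e \<longlonglongrightarrow> 0"
  shows "uniform_limit S f g sequentially"
proof (rule uniform_limitI)
  fix \<epsilon> :: real assume "\<epsilon> > 0"
  with assms(2) have "\<forall>\<^sub>F n in sequentially. e n < \<epsilon>" by (simp add: order_tendsto_iff)
  then show "\<forall>\<^sub>F n in sequentially. \<forall>x\<in>S. dist (f n x) (g x) < \<epsilon>"
    by eventually_elim (use assms(1) le_less_trans in blast)
qed

lemma uniform_limit_real_polynomials:
  fixes g :: "real \<Rightarrow> real"
  assumes "compact S" and "continuous_on S g"
  obtains P where "\<And>n. real_polynomial_function (P n)" and "uniform_limit S P g sequentially"
proof -
  have "\<exists>p. polynomial_function p \<and> (\<forall>y\<in>S. norm (g y - p y) < 1 / Suc n)" for n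
    using Stone_Weierstrass_polynomial_function[OF assms, of "1 / Suc n"] by simp
  then obtain P where P: "\<And>n. real_polynomial_function (P n)"
    and approx: "\<And>n y. y \<in> S \<Longrightarrow> norm (g y - P n y) < 1 / Suc n"
    by (metis real_polynomial_function_eq)
  have "uniform_limit S P g sequentially"
  proof (rule uniform_limit_of_dist_le)
    show "(\<lambda>n. 1 / real (Suc n)) \<longlonglongrightarrow> 0" by (rule LIMSEQ_Suc[OF lim_const_over_n])
    fix n x assume "x \<in> S"
    then show "dist (P n x) (g x) \<le> 1 / real (Suc n)"
      using approx[of x n] by (simp add: dist_norm norm_minus_commute)
  qed
  with P show thesis by (rule that)
qed

lemma compactin_finite_subcover_pointwise:
  assumes "compactin X S" and "\<And>x. x \<in> S \<Longrightarrow> openin X (U x) \<and> x \<in> U x"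
  obtains F where "F \<subseteq> S" "finite F" "S \<subseteq> (\<Union>x\<in>F. U x)"
proof -
  obtain \<F> where "finite \<F>" "\<F> \<subseteq> U ` S" "S \<subseteq> \<Union>\<F>"
    using compactinD[OF assms(1), of "U ` S"] assms(2) by blast
  with finite_subset_image[of \<F> U S] that show thesis by blast
qed

lemma continuous_map_mult [continuous_intros]:
  fixes f g :: "'a \<Rightarrow> 'b::real_normed_algebra"
  shows "continuous_map X euclidean f \<Longrightarrow> continuous_map X euclidean g \<Longrightarrow>
    continuous_map X euclidean (\<lambda>x. f x * g x)"
  by (simp add: continuous_map_atin tendsto_mult)

lemma closedin_equations:
  fixes f g :: "'i \<Rightarrow> 'x \<Rightarrow> 'b::real_normed_vector"
  assumes "\<And>i. i \<in> I \<Longrightarrow> continuous_map X euclidean (f i)"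
    and "\<And>i. i \<in> I \<Longrightarrow> continuous_map X euclidean (g i)"
  shows "closedin X {x \<in> topspace X. \<forall>i\<in>I. f i x = g i x}"
proof (cases "I = {}")
  case False
  have "closedin X {x \<in> topspace X. f i x = g i x}" if "i \<in> I" for i
    using closedin_continuous_maps_eq[OF Hausdorff_space_euclidean assms(1,2)[OF that]] .
  then have "closedin X (topspace X \<inter> (\<Inter>i\<in>I. {x \<in> topspace X. f i x = g i x}))"
    using False by (intro closedin_Int closedin_INT) auto
  moreover have "topspace X \<inter> (\<Inter>i\<in>I. {x \<in> topspace X. f i x = g i x}) =
      {x \<in> topspace X. \<forall>i\<in>I. f i x = g i x}"
    by auto
  ultimately show ?thesis by simp
qed simp

lemma compactin_subsets_image:
  assumes f: "homeomorphic_map X Y f" and F: "F \<subseteq> topspace X"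
  shows "{K. compactin Y K \<and> K \<subseteq> f ` F} = (\<lambda>K. f ` K) ` {K. compactin X K \<and> K \<subseteq> F}"
proof
  show "{K. compactin Y K \<and> K \<subseteq> f ` F} \<subseteq> (\<lambda>K. f ` K) ` {K. compactin X K \<and> K \<subseteq> F}"
  proof clarify
    fix K assume K: "compactin Y K" "K \<subseteq> f ` F"
    then obtain K' where "K' \<subseteq> F" "K = f ` K'" by (auto simp: subset_image_iff)
    moreover have "compactin X K'"
      using homeomorphic_map_compactness[OF f] K(1) \<open>K' \<subseteq> F\<close> \<open>K = f ` K'\<close> F by auto
    ultimately show "K \<in> (\<lambda>K. f ` K) ` {K. compactin X K \<and> K \<subseteq> F}" by blast
  qed
  show "(\<lambda>K. f ` K) ` {K. compactin X K \<and> K \<subseteq> F} \<subseteq> {K. compactin Y K \<and> K \<subseteq> f ` F}"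
    using homeomorphic_map_compactness_eq[OF f] by auto
qed

section \<open>Mean values\<close>

text \<open>Testing against the tent function is enough to pin down a mean value.\<close>
definition tent :: "'a::euclidean_space \<Rightarrow> complex" where
  "tent x = complex_of_real (max 0 (1 - norm x))"

lemma continuous_on_tent: "continuous_on UNIV tent"
  unfolding tent_def by (intro continuous_intros)

lemma borel_measurable_tent [measurable]: "tent \<in> borel_measurable borel"
  by (rule borel_measurable_continuous_onI[OF continuous_on_tent])

lemma tent_eq_0: "norm x \<ge> 1 \<Longrightarrow> tent x = 0"
  unfolding tent_def by simp

lemma norm_tent_diff_le: "norm (tent a - tent b) \<le> norm (a - b)"
proof -
  have "\<bar>max 0 (1 - norm a) - max 0 (1 - norm b)\<bar> \<le> \<bar>norm a - norm b\<bar>" by linarith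
  also have "\<dots> \<le> norm (a - b)" by (rule norm_triangle_ineq3)
  finally show ?thesis unfolding tent_def by (simp flip: of_real_diff)
qed

lemma integrable_tent_shift: "integrable lborel (\<lambda>x. tent (x - c))"
proof -
  have "integrable lborel (\<lambda>x. indicator (cball c 1) x *\<^sub>R tent (x - c))"
    by (rule borel_integrable_compact) (auto simp: tent_def intro!: continuous_intros)
  moreover have "indicator (cball c 1) x *\<^sub>R tent (x - c) = tent (x - c)" for x
    by (cases "dist c x \<le> 1") (auto simp: tent_eq_0 dist_norm norm_minus_commute indicator_def)
  ultimately show ?thesis by simp
qed

lemma integrable_tent: "integrable lebesgue tent"
proof -
  have "integrable lborel tent" using integrable_tent_shift[of 0] by simp
  then show ?thesis by (simp add: integrable_completion)
qed

lemma integral_tent_nonzero: "(LINT x|lebesgue. tent (x::'a::euclidean_space)) \<noteq> 0"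
proof -
  have int: "integrable lborel (\<lambda>x::'a. max 0 (1 - norm x))"
    using integrable_Re[OF integrable_tent_shift[of 0]] by (simp add: tent_def)
  have "0 < measure lborel (ball (0::'a) (1/2)) * (1/2)"
    by (simp add: content_ball_pos)
  also have "\<dots> = (LINT x|lborel. indicator (ball (0::'a) (1/2)) x * (1/2::real))" by simp
  also have "\<dots> \<le> (LINT x|lborel. max 0 (1 - norm (x::'a)))"
  proof (rule integral_mono[OF _ int])
    show "integrable lborel (\<lambda>x::'a. indicator (ball 0 (1/2)) x * (1/2::real))"
      using emeasure_bounded_finite[OF bounded_ball, of "0::'a" "1/2"]
      by (intro integrable_mult_left integrable_real_indicator) auto
  qed (auto simp: indicator_def)
  finally have "(LINT x|lborel. max 0 (1 - norm (x::'a))) \<noteq> 0" by simp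
  moreover have "(LINT x|lebesgue. tent (x::'a)) = complex_of_real (LINT x|lborel. max 0 (1 - norm (x::'a)))"
    unfolding tent_def by (simp add: integral_completion integral_complex_of_real)
  ultimately show ?thesis by simp
qed

lemma has_mean_value_unique:
  fixes u :: "'a::euclidean_space \<Rightarrow> complex"
  assumes "has_mean_value u m" and "has_mean_value u m'"
  shows "m = m'"
proof -
  have "((\<lambda>t::real. LINT x|lebesgue. u (inverse t *\<^sub>R x) * tent x)
      \<longlongrightarrow> m * (LINT x|lebesgue. tent (x::'a))) (at_right 0)"
    "((\<lambda>t::real. LINT x|lebesgue. u (inverse t *\<^sub>R x) * tent x)
      \<longlongrightarrow> m' * (LINT x|lebesgue. tent (x::'a))) (at_right 0)"
    using assms integrable_tent by (auto simp: has_mean_value_def)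
  from tendsto_unique[OF trivial_limit_at_right_real this]
  have "m * (LINT x|lebesgue. tent (x::'a)) = m' * (LINT x|lebesgue. tent (x::'a))" .
  then show ?thesis using integral_tent_nonzero[where 'a='a] by simp
qed

lemma mean_value_eqI: "has_mean_value u m \<Longrightarrow> mean_value u = m"
  unfolding mean_value_def using has_mean_value_unique by blast

lemma integral_lborel_translate:
  fixes f :: "'a::euclidean_space \<Rightarrow> complex"
  assumes [measurable]: "f \<in> borel_measurable borel"
  shows "(LINT x|lborel. f (x + c)) = (LINT x|lborel. f x)"
proof -
  have "(LINT x|lborel. f x) = (LINT x|distr lborel borel ((+) c). f x)"
    by (simp add: lborel_distr_plus)
  also have "\<dots> = (LINT x|lborel. f (c + x))" by (rule integral_distr) auto
  finally show ?thesis by (simp add: add.commute)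
qed

lemma integrable_mult_tent_shift:
  fixes v :: "'a::euclidean_space \<Rightarrow> complex"
  assumes [measurable]: "v \<in> borel_measurable borel" and B: "\<And>x. norm (v x) \<le> B"
  shows "integrable lborel (\<lambda>x. v x * tent (x - c))"
proof (rule Bochner_Integration.integrable_bound)
  have "0 \<le> B" using B[of 0] norm_ge_zero order_trans by blast
  show "integrable lborel (\<lambda>x. B * norm (tent (x - c)))"
    by (intro integrable_mult_right integrable_norm integrable_tent_shift)
  show "AE x in lborel. norm (v x * tent (x - c)) \<le> norm (B * norm (tent (x - c)))"
    using B \<open>0 \<le> B\<close> by (intro AE_I2) (simp add: norm_mult mult_right_mono abs_mult)
qed measurable

lemma norm_integral_tent_shift_le:
  fixes v :: "'a::euclidean_space \<Rightarrow> complex"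
  assumes v [measurable]: "v \<in> borel_measurable borel" and B: "\<And>x. norm (v x) \<le> B"
    and c: "norm c \<le> 1"
  shows "norm ((LINT x|lborel. v x * tent (x - c)) - (LINT x|lborel. v x * tent x))
    \<le> B * norm c * measure lborel (cball (0::'a) 2)"
proof -
  have pointwise: "norm (v x * tent (x - c) - v x * tent x) \<le> indicator (cball 0 2) x * (B * norm c)"
    for x
  proof (cases "norm x \<le> 2")
    case True
    have "norm (v x * tent (x - c) - v x * tent x) = norm (v x) * norm (tent (x - c) - tent x)"
      by (simp add: norm_mult flip: right_diff_distrib)
    also have "\<dots> \<le> B * norm c"
      using B[of x] norm_tent_diff_le[of "x - c" x] by (intro mult_mono) (auto intro: order_trans[OF norm_ge_zero])
    finally show ?thesis using True by simp
  next
    case False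
    then have "norm (x - c) \<ge> 1" using c norm_triangle_ineq2[of x c] by simp
    then show ?thesis using False by (simp add: tent_eq_0)
  qed
  have int: "integrable lborel (\<lambda>x. v x * tent (x - c))" "integrable lborel (\<lambda>x. v x * tent x)"
    using integrable_mult_tent_shift[OF v B, of c] integrable_mult_tent_shift[OF v B, of 0] by simp_all
  have "norm ((LINT x|lborel. v x * tent (x - c)) - (LINT x|lborel. v x * tent x))
      \<le> (LINT x|lborel. norm (v x * tent (x - c) - v x * tent x))"
    using integral_norm_bound[of lborel "\<lambda>x. v x * tent (x - c) - v x * tent x"] int by simp
  also have "\<dots> \<le> (LINT x|lborel. indicator (cball (0::'a) 2) x * (B * norm c))"
  proof (rule integral_mono[OF integrable_norm[OF Bochner_Integration.integrable_diff[OF int]]])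
    show "integrable lborel (\<lambda>x. indicator (cball (0::'a) 2) x * (B * norm c))"
      using emeasure_bounded_finite[OF bounded_cball, of "0::'a" 2]
      by (intro integrable_mult_left integrable_real_indicator) auto
  qed (rule pointwise)
  finally show ?thesis by (simp add: mult_ac)
qed

text \<open>The substitution \<open>x \<mapsto> x - t y\<close> turns the first average into the second one
  with the test function shifted by \<open>t y\<close>.\<close>
lemma norm_tent_average_translate_le:
  fixes u :: "'a::euclidean_space \<Rightarrow> complex"
  assumes [measurable]: "u \<in> borel_measurable borel" and B: "\<And>x. norm (u x) \<le> B"
    and t: "0 < t" "norm (t *\<^sub>R y) \<le> 1"
  shows "norm ((LINT x|lebesgue. u (inverse t *\<^sub>R x + y) * tent x) -
      (LINT x|lebesgue. u (inverse t *\<^sub>R x) * tent x))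
    \<le> B * norm (t *\<^sub>R y) * measure lborel (cball (0::'a) 2)"
proof -
  have lborel: "(LINT x|lebesgue. u (inverse t *\<^sub>R x + z) * tent x) =
      (LINT x|lborel. u (inverse t *\<^sub>R x + z) * tent x)" for z
    by (rule integral_completion) measurable
  have "(LINT x|lborel. u (inverse t *\<^sub>R x + y) * tent x) =
      (LINT x|lborel. u (inverse t *\<^sub>R (x - t *\<^sub>R y) + y) * tent (x - t *\<^sub>R y))"
    using integral_lborel_translate[of "\<lambda>x. u (inverse t *\<^sub>R x + y) * tent x" "- (t *\<^sub>R y)"]
    by simp
  also have "\<dots> = (LINT x|lborel. u (inverse t *\<^sub>R x) * tent (x - t *\<^sub>R y))"
    using t by (simp add: algebra_simps)
  finally show ?thesis
    using norm_integral_tent_shift_le[of "\<lambda>x. u (inverse t *\<^sub>R x)", OF _ B t(2)] lborel[of 0] lborel[of y]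
    by simp
qed

lemma has_mean_value_translate:
  fixes u :: "'a::euclidean_space \<Rightarrow> complex"
  assumes u: "u \<in> borel_measurable borel" and B: "\<And>x. norm (u x) \<le> B"
    and m: "has_mean_value u m" and m': "has_mean_value (\<lambda>x. u (x + y)) m'"
  shows "m' = m"
proof -
  define F where "F z t = (LINT x|lebesgue. u (inverse t *\<^sub>R x + z) * tent x)" for z and t :: real
  define I where "I = (LINT x|lebesgue. tent (x::'a))"
  define C where "C = B * norm y * measure lborel (cball (0::'a) 2)"
  have "\<forall>\<^sub>F t in at_right (0::real). t \<in> {0<..<inverse (norm y + 1)}"
    by (rule eventually_at_right_real) (simp add: add_nonneg_pos)
  then have close: "\<forall>\<^sub>F t in at_right 0. norm (F y t - F 0 t) \<le> C * t"
  proof eventually_elim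
    case (elim t)
    have "0 < t" and "t * (norm y + 1) < 1"
      using elim add_nonneg_pos[OF norm_ge_zero[of y] zero_less_one] by (auto simp: field_simps)
    then have "0 < t" and "norm (t *\<^sub>R y) \<le> 1" by (simp_all add: algebra_simps)
    from norm_tent_average_translate_le[OF u B this] \<open>0 < t\<close> show ?case
      by (simp add: F_def C_def mult_ac)
  qed
  have "((\<lambda>t. F y t - F 0 t) \<longlongrightarrow> 0) (at_right 0)"
  proof (rule Lim_null_comparison[OF close])
    have "((\<lambda>t::real. C * t) \<longlongrightarrow> C * 0) (at_right 0)" by (intro tendsto_intros)
    then show "((\<lambda>t::real. C * t) \<longlongrightarrow> 0) (at_right 0)" by simp
  qed
  moreover have "((\<lambda>t. F y t - F 0 t) \<longlongrightarrow> m' * I - m * I) (at_right 0)"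
  proof (intro tendsto_diff)
    show "((\<lambda>t. F y t) \<longlongrightarrow> m' * I) (at_right 0)"
      using m'[unfolded has_mean_value_def, rule_format, OF integrable_tent] by (simp add: F_def I_def)
    show "((\<lambda>t. F 0 t) \<longlongrightarrow> m * I) (at_right 0)"
      using m[unfolded has_mean_value_def, rule_format, OF integrable_tent] by (simp add: F_def I_def)
  qed
  ultimately have "m' * I - m * I = 0"
    using tendsto_unique by (metis trivial_limit_at_right_real)
  then show ?thesis using integral_tent_nonzero[where 'a='a] by (simp add: I_def)
qed

section \<open>Characters of an H-supralgebra\<close>

locale h_supralgebra =
  fixes A :: "('a::euclidean_space \<Rightarrow> complex) set"
  assumes H_supralgebra: "H_supralgebra A"
begin

abbreviation "\<Delta> \<equiv> gelfand_spectrum A"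

lemma mem_bcontinuous: "u \<in> A \<Longrightarrow> u \<in> bcontinuous"
  and const_closed [intro, simp]: "(\<lambda>_. c) \<in> A"
  and add_closed [intro]: "u \<in> A \<Longrightarrow> v \<in> A \<Longrightarrow> (\<lambda>x. u x + v x) \<in> A"
  and mult_closed [intro]: "u \<in> A \<Longrightarrow> v \<in> A \<Longrightarrow> (\<lambda>x. u x * v x) \<in> A"
  and scale_closed [intro]: "u \<in> A \<Longrightarrow> (\<lambda>x. c * u x) \<in> A"
  and cnj_closed [intro]: "u \<in> A \<Longrightarrow> (\<lambda>x. cnj (u x)) \<in> A"
  and uniform_limit_closed: "(\<And>n. f n \<in> A) \<Longrightarrow> uniform_limit UNIV f u sequentially \<Longrightarrow> u \<in> A"
  and has_mean_value_ex: "u \<in> A \<Longrightarrow> \<exists>m. has_mean_value u m"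
  using H_supralgebra unfolding H_supralgebra_def by blast+

lemma diff_closed [intro]: "u \<in> A \<Longrightarrow> v \<in> A \<Longrightarrow> (\<lambda>x. u x - v x) \<in> A"
proof -
  assume "u \<in> A" "v \<in> A"
  then have "(\<lambda>x. u x + (-1) * v x) \<in> A" by (intro add_closed scale_closed)
  then show ?thesis by simp
qed

lemma power_closed [intro]: "u \<in> A \<Longrightarrow> (\<lambda>x. u x ^ n) \<in> A"
  by (induction n) (simp_all add: mult_closed)

lemma sum_closed: "finite I \<Longrightarrow> (\<And>i. i \<in> I \<Longrightarrow> f i \<in> A) \<Longrightarrow> (\<lambda>x. \<Sum>i\<in>I. f i x) \<in> A"
  by (induction I rule: finite_induct) (simp_all add: add_closed)

lemma prod_closed: "finite I \<Longrightarrow> (\<And>i. i \<in> I \<Longrightarrow> f i \<in> A) \<Longrightarrow> (\<lambda>x. \<Prod>i\<in>I. f i x) \<in> A"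
  by (induction I rule: finite_induct) (simp_all add: mult_closed)

lemma continuous_on_mem: "u \<in> A \<Longrightarrow> continuous_on UNIV u"
  using mem_bcontinuous unfolding bcontinuous_def by blast

lemma bounded_mem: "u \<in> A \<Longrightarrow> \<exists>B. \<forall>x. norm (u x) \<le> B"
  using mem_bcontinuous[of u] unfolding bcontinuous_def bounded_iff by auto

definition sup_bound :: "('a \<Rightarrow> complex) \<Rightarrow> real" where
  "sup_bound u = (SOME B. \<forall>x. norm (u x) \<le> B)"

lemma norm_le_sup_bound: "u \<in> A \<Longrightarrow> norm (u x) \<le> sup_bound u"
  using someI_ex[OF bounded_mem] unfolding sup_bound_def by blast

text \<open>Uniform limit of the partial sums of the geometric series \<open>\<Sum>k. u\<^sup>k / l\<^sup>k\<^sup>+\<^sup>1\<close>.\<close>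
lemma inverse_closed:
  assumes u: "u \<in> A" and B: "\<And>x. norm (u x) \<le> B" and l: "B < norm l"
  shows "(\<lambda>x. 1 / (l - u x)) \<in> A"
proof -
  define q where "q = B / norm l"
  have B0: "B \<ge> 0" using B[of 0] norm_ge_zero order_trans by blast
  have l0: "l \<noteq> 0" and q: "0 \<le> q" "q < 1" using B0 l by (auto simp: q_def divide_less_eq)
  have ne: "l - u x \<noteq> 0" for x using B[of x] l by auto
  define S where "S n = (\<lambda>x. \<Sum>k<n. (1 / l ^ (k+1)) * u x ^ k)" for n
  have "S n \<in> A" for n unfolding S_def by (intro sum_closed scale_closed power_closed u) simp
  moreover have "uniform_limit UNIV S (\<lambda>x. 1 / (l - u x)) sequentially"
  proof (rule uniform_limit_of_dist_le)
    fix n x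
    have "S n x = (\<Sum>k<n. (u x / l) ^ k) / l"
      by (simp add: S_def sum_divide_distrib power_divide field_simps)
    also have "\<dots> = ((1 - (u x / l) ^ n) / (1 - u x / l)) / l"
    proof -
      have "u x / l \<noteq> 1" using ne by (auto simp: field_simps)
      then show ?thesis by (simp only: sum_gp_strict if_False)
    qed
    also have "\<dots> = (1 - (u x / l) ^ n) / (l - u x)"
      using l0 ne by (simp add: field_simps)
    finally have "S n x = (1 - (u x / l) ^ n) / (l - u x)" .
    then have "dist (S n x) (1 / (l - u x)) = norm (u x / l) ^ n / norm (l - u x)"
      by (simp add: dist_norm diff_divide_distrib norm_divide norm_power)
    also have "\<dots> \<le> q ^ n / (norm l - B)"
    proof (rule frac_le)
      show "norm (u x / l) ^ n \<le> q ^ n"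
        unfolding q_def using B[of x] by (intro power_mono) (auto simp: norm_divide divide_right_mono)
      show "norm l - B \<le> norm (l - u x)" using B[of x] norm_triangle_ineq2[of l "u x"] by linarith
    qed (use l q in auto)
    finally show "dist (S n x) (1 / (l - u x)) \<le> q ^ n / (norm l - B)" .
  next
    show "(\<lambda>n. q ^ n / (norm l - B)) \<longlonglongrightarrow> 0"
      using LIMSEQ_power_zero[of q] q by (auto intro: tendsto_divide_zero)
  qed
  ultimately show ?thesis by (rule uniform_limit_closed)
qed

context
  fixes s assumes s: "s \<in> \<Delta>"
begin

lemma character_add: "u \<in> A \<Longrightarrow> v \<in> A \<Longrightarrow> s (\<lambda>x. u x + v x) = s u + s v"
  and character_mult: "u \<in> A \<Longrightarrow> v \<in> A \<Longrightarrow> s (\<lambda>x. u x * v x) = s u * s v"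
  and character_scale: "u \<in> A \<Longrightarrow> s (\<lambda>x. c * u x) = c * s u"
  and character_undefined: "u \<notin> A \<Longrightarrow> s u = undefined"
  and character_nonzero: "\<exists>u\<in>A. s u \<noteq> 0"
  using s unfolding gelfand_spectrum_def by blast+

lemma character_one: "s (\<lambda>_. 1) = 1"
proof -
  obtain u where u: "u \<in> A" "s u \<noteq> 0" using character_nonzero by blast
  have "s u * 1 = s u * s (\<lambda>_. 1)" using character_mult[OF u(1), of "\<lambda>_. 1"] by simp
  then show ?thesis using u(2) by (metis mult_left_cancel)
qed

lemma character_const: "s (\<lambda>_. c) = c"
  using character_scale[of "\<lambda>_. 1" c] character_one by simp

lemma character_diff:
  assumes u: "u \<in> A" and v: "v \<in> A" shows "s (\<lambda>x. u x - v x) = s u - s v"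
proof -
  have "s (\<lambda>x. u x + (-1) * v x) = s u + s (\<lambda>x. (-1) * v x)"
    by (rule character_add[OF u scale_closed[OF v]])
  also have "\<dots> = s u + (-1) * s v" by (simp only: character_scale[OF v])
  finally show ?thesis by simp
qed

lemma character_sum:
  "finite I \<Longrightarrow> (\<And>i. i \<in> I \<Longrightarrow> f i \<in> A) \<Longrightarrow> s (\<lambda>x. \<Sum>i\<in>I. f i x) = (\<Sum>i\<in>I. s (f i))"
  by (induction I rule: finite_induct) (simp_all add: character_const character_add sum_closed)

lemma character_prod:
  "finite I \<Longrightarrow> (\<And>i. i \<in> I \<Longrightarrow> f i \<in> A) \<Longrightarrow> s (\<lambda>x. \<Prod>i\<in>I. f i x) = (\<Prod>i\<in>I. s (f i))"
  by (induction I rule: finite_induct) (simp_all add: character_one character_mult prod_closed)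

text \<open>Were |s u| > B, then \<open>s u - u\<close> would be invertible in A although s annihilates it.\<close>
lemma character_norm_le:
  assumes u: "u \<in> A" and B: "\<And>x. norm (u x) \<le> B"
  shows "norm (s u) \<le> B"
proof (rule ccontr)
  assume "\<not> ?thesis"
  then have l: "B < norm (s u)" by simp
  have ne: "s u - u x \<noteq> 0" for x using B[of x] l by auto
  have w: "(\<lambda>x. 1 / (s u - u x)) \<in> A" using inverse_closed[OF u B l] .
  have "(\<lambda>x. (s u - u x) * (1 / (s u - u x))) = (\<lambda>_. 1)" using ne by simp
  then have "1 = s (\<lambda>x. (s u - u x) * (1 / (s u - u x)))" using character_one by simp
  also have "\<dots> = s (\<lambda>x. s u - u x) * s (\<lambda>x. 1 / (s u - u x))"
    by (rule character_mult[OF diff_closed[OF const_closed u] w])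
  also have "s (\<lambda>x. s u - u x) = 0"
    using character_diff[OF const_closed u] by (simp add: character_const)
  finally show False by simp
qed

lemma dist_character_le:
  assumes u: "u \<in> A" and v: "v \<in> A" and e: "\<And>x. dist (u x) (v x) \<le> e"
  shows "dist (s u) (s v) \<le> e"
proof -
  have "norm (s (\<lambda>x. u x - v x)) \<le> e"
    by (rule character_norm_le[OF diff_closed[OF u v]]) (use e in \<open>simp add: dist_norm\<close>)
  then show ?thesis using character_diff[OF u v] by (simp add: dist_norm)
qed

lemma character_tendsto:
  assumes f: "\<And>n. f n \<in> A" and lim: "uniform_limit UNIV f u sequentially"
  shows "(\<lambda>n. s (f n)) \<longlonglongrightarrow> s u"
proof (rule tendstoI)
  fix e :: real assume "e > 0"
  have u: "u \<in> A" using uniform_limit_closed[OF f lim] .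
  have "\<forall>\<^sub>F n in sequentially. \<forall>x\<in>UNIV. dist (f n x) (u x) < e / 2"
    using uniform_limitD[OF lim, of "e / 2"] \<open>e > 0\<close> by simp
  then show "\<forall>\<^sub>F n in sequentially. dist (s (f n)) (s u) < e"
  proof eventually_elim
    case (elim n)
    then have "dist (s (f n)) (s u) \<le> e / 2" by (intro dist_character_le[OF f u]) (simp add: less_imp_le)
    then show ?case using \<open>e > 0\<close> by simp
  qed
qed

end

definition real_elements :: "('a \<Rightarrow> complex) set" where
  "real_elements = {w \<in> A. \<forall>x. Im (w x) = 0}"

text \<open>If \<open>s u = a + \<i>b\<close> with \<open>b \<noteq> 0\<close>, then for \<open>2bt = B\<^sup>2 + 1 - b\<^sup>2\<close> the value
  \<open>s (u + \<i>t) = a + \<i>(b + t)\<close> exceeds the sup norm \<open>\<surd>(B\<^sup>2 + t\<^sup>2)\<close> of \<open>u + \<i>t\<close>.\<close>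
lemma character_real:
  assumes s: "s \<in> \<Delta>" and w: "w \<in> real_elements"
  shows "s w = complex_of_real (Re (s w))"
proof -
  have u: "w \<in> A" and r: "\<And>x. Im (w x) = 0" using w by (auto simp: real_elements_def)
  have "Im (s w) = 0"
  proof (rule ccontr)
    assume b0: "Im (s w) \<noteq> 0"
    obtain B where B: "\<And>x. norm (w x) \<le> B" using bounded_mem[OF u] by blast
    have B0: "B \<ge> 0" using B[of 0] norm_ge_zero order_trans by blast
    define a where "a = Re (s w)"
    define b where "b = Im (s w)"
    define t where "t = (B\<^sup>2 + 1 - b\<^sup>2) / (2 * b)"
    have bt: "2 * b * t = B\<^sup>2 + 1 - b\<^sup>2" using b0 unfolding t_def b_def by simp
    have "norm (w x + \<i> * of_real t) \<le> sqrt (B\<^sup>2 + t\<^sup>2)" for x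
    proof -
      have "\<bar>Re (w x)\<bar> \<le> B" using B[of x] r[of x] abs_Re_le_cmod[of "w x"] by linarith
      then have "(Re (w x))\<^sup>2 \<le> B\<^sup>2" using B0 by (simp add: abs_le_square_iff[symmetric])
      then show ?thesis using r[of x] by (simp add: norm_complex_def)
    qed
    then have "norm (s (\<lambda>x. w x + \<i> * of_real t)) \<le> sqrt (B\<^sup>2 + t\<^sup>2)"
      using character_norm_le[OF s add_closed[OF u const_closed]] by blast
    moreover have "s (\<lambda>x. w x + \<i> * of_real t) = s w + \<i> * of_real t"
      using character_add[OF s u const_closed] character_const[OF s] by simp
    ultimately have "sqrt (a\<^sup>2 + (b + t)\<^sup>2) \<le> sqrt (B\<^sup>2 + t\<^sup>2)"
      unfolding a_def b_def by (simp add: norm_complex_def)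
    then have "a\<^sup>2 + b\<^sup>2 + 2 * b * t \<le> B\<^sup>2" by (simp add: power2_eq_square algebra_simps)
    then show False using bt by (smt (verit) zero_le_power2)
  qed
  then show ?thesis by (simp add: complex_eq_iff)
qed

lemma character_cnj:
  assumes s: "s \<in> \<Delta>" and u: "u \<in> A"
  shows "s (\<lambda>x. cnj (u x)) = cnj (s u)"
proof -
  define r where "r = (\<lambda>x. (1/2) * (u x + cnj (u x)))"
  define q where "q = (\<lambda>x. (- \<i>/2) * (u x - cnj (u x)))"
  have rA: "r \<in> A" unfolding r_def using u by (intro scale_closed add_closed cnj_closed)
  have qA: "q \<in> A" unfolding q_def using u by (intro scale_closed diff_closed cnj_closed)
  have r: "r \<in> real_elements" and q: "q \<in> real_elements"
    using rA qA unfolding real_elements_def r_def q_def by auto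
  have "u = (\<lambda>x. r x + \<i> * q x)" and "(\<lambda>x. cnj (u x)) = (\<lambda>x. r x + (- \<i>) * q x)"
    unfolding r_def q_def by (auto simp: complex_eq_iff)
  then have "s u = s r + \<i> * s q" and "s (\<lambda>x. cnj (u x)) = s r + (- \<i>) * s q"
    by (simp_all only: character_add[OF s rA scale_closed[OF qA]] character_scale[OF s qA])
  then show ?thesis
    using character_real[OF s r] character_real[OF s q] by (simp add: complex_eq_iff)
qed

lemma polynomial_calculus:
  assumes p: "real_polynomial_function p" and w: "w \<in> real_elements"
  shows "(\<lambda>x. complex_of_real (p (Re (w x)))) \<in> A \<and>
         (\<forall>s\<in>\<Delta>. s (\<lambda>x. complex_of_real (p (Re (w x)))) = of_real (p (Re (s w))))"
  using p
proof (induction p)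
  case (linear f)
  then interpret bounded_linear f .
  define c where "c = f 1"
  have f: "f y = y * c" for y using scaleR[of y 1] unfolding c_def by simp
  have w': "w \<in> A" and r: "\<And>x. Im (w x) = 0" using w by (auto simp: real_elements_def)
  have "(\<lambda>x. complex_of_real (f (Re (w x)))) = (\<lambda>x. of_real c * w x)"
    using r by (auto simp: f complex_eq_iff)
  moreover have "s (\<lambda>x. of_real c * w x) = of_real (f (Re (s w)))" if s: "s \<in> \<Delta>" for s
    using character_scale[OF s w'] character_real[OF s w] by (simp add: f complex_eq_iff)
  ultimately show ?case using w' by auto
next
  case (const c)
  then show ?case using character_const by auto
next
  case (add f g)
  then have f: "(\<lambda>x. of_real (f (Re (w x)))) \<in> A" and g: "(\<lambda>x. of_real (g (Re (w x)))) \<in> A"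
    by auto
  have "s (\<lambda>x. of_real (f (Re (w x))) + of_real (g (Re (w x)))) = of_real (f (Re (s w)) + g (Re (s w)))"
    if s: "s \<in> \<Delta>" for s
    using character_add[OF s f g] add.IH s by simp
  then show ?case using add_closed[OF f g] by simp
next
  case (mult f g)
  then have f: "(\<lambda>x. of_real (f (Re (w x)))) \<in> A" and g: "(\<lambda>x. of_real (g (Re (w x)))) \<in> A"
    by auto
  have "s (\<lambda>x. of_real (f (Re (w x))) * of_real (g (Re (w x)))) = of_real (f (Re (s w)) * g (Re (s w)))"
    if s: "s \<in> \<Delta>" for s
    using character_mult[OF s f g] mult.IH s by simp
  then show ?case using mult_closed[OF f g] by simp
qed

text \<open>Weierstrass approximation on [-B, B], which contains the ranges of w and of all its
  character values.\<close>
lemma continuous_calculus: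
  assumes w: "w \<in> real_elements" and g: "continuous_on UNIV g"
  shows "(\<lambda>x. complex_of_real (g (Re (w x)))) \<in> real_elements"
    and "s \<in> \<Delta> \<Longrightarrow> s (\<lambda>x. complex_of_real (g (Re (w x)))) = of_real (g (Re (s w)))"
proof -
  have wA: "w \<in> A" and r: "\<And>x. Im (w x) = 0" using w by (auto simp: real_elements_def)
  obtain B where B: "\<And>x. norm (w x) \<le> B" using bounded_mem[OF wA] by blast
  define S where "S = {-B..B}"
  obtain P where P: "\<And>n. real_polynomial_function (P n)" and P_lim: "uniform_limit S P g sequentially"
    using uniform_limit_real_polynomials[of S g] continuous_on_subset[OF g] by (auto simp: S_def)
  have range_S: "Re z \<in> S" if "norm z \<le> B" "Im z = 0" for z
    using that unfolding S_def by (auto simp: norm_complex_def)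
  define Q where "Q n = (\<lambda>x. complex_of_real (P n (Re (w x))))" for n
  define G where "G = (\<lambda>x. complex_of_real (g (Re (w x))))"
  have Q: "Q n \<in> A" "\<And>s. s \<in> \<Delta> \<Longrightarrow> s (Q n) = of_real (P n (Re (s w)))" for n
    using polynomial_calculus[OF P w] unfolding Q_def by auto
  have "uniform_limit UNIV Q G sequentially"
    unfolding Q_def G_def
    by (intro bounded_linear.uniform_limit[OF bounded_linear_of_real]
        uniform_limit_compose'[OF P_lim]) (use range_S B r in auto)
  then have G: "G \<in> A" by (rule uniform_limit_closed[OF Q(1)])
  then show "(\<lambda>x. complex_of_real (g (Re (w x)))) \<in> real_elements"
    unfolding G_def real_elements_def by simp
  assume s: "s \<in> \<Delta>"
  have "Re (s w) \<in> S"
    using range_S character_norm_le[OF s wA B] character_real[OF s w] by (metis Im_complex_of_real)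
  then have "(\<lambda>n. P n (Re (s w))) \<longlonglongrightarrow> g (Re (s w))"
    using uniform_limit_on_subset[OF P_lim, of "{Re (s w)}"] by simp
  then have "(\<lambda>n. s (Q n)) \<longlonglongrightarrow> of_real (g (Re (s w)))"
    unfolding Q(2)[OF s] by (rule tendsto_of_real)
  moreover have "(\<lambda>n. s (Q n)) \<longlonglongrightarrow> s G"
    using character_tendsto[OF s Q(1) \<open>uniform_limit UNIV Q G sequentially\<close>] .
  ultimately show "s (\<lambda>x. complex_of_real (g (Re (w x)))) = of_real (g (Re (s w)))"
    unfolding G_def using LIMSEQ_unique by blast
qed

abbreviation "X \<equiv> spectrum_topology A"

abbreviation "pointwise_topology \<equiv> product_topology (\<lambda>_. euclidean :: complex topology) A"

lemma spectrum_subset_topspace: "\<Delta> \<subseteq> topspace pointwise_topology"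
  by (auto simp: PiE_def extensional_def gelfand_spectrum_def)

lemma topspace_spectrum_topology [simp]: "topspace X = \<Delta>"
  using spectrum_subset_topspace unfolding spectrum_topology_def by auto

lemma continuous_map_evaluation: "u \<in> A \<Longrightarrow> continuous_map X euclidean (\<lambda>s. s u)"
  unfolding spectrum_topology_def
  by (rule continuous_map_from_subtopology) (rule continuous_map_product_projection)

lemma continuous_map_into_spectrum_topology:
  "continuous_map Y pointwise_topology f \<Longrightarrow> f ` topspace Y \<subseteq> \<Delta> \<Longrightarrow> continuous_map Y X f"
  by (auto simp: spectrum_topology_def continuous_map_in_subtopology)

lemma Hausdorff_space_spectrum_topology: "Hausdorff_space X"
  unfolding spectrum_topology_def
  by (intro Hausdorff_space_subtopology) (simp add: Hausdorff_space_product_topology)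

text \<open>Each defining condition is written as a family of equations, to apply
  \<open>closedin_equations\<close>.\<close>
lemma spectrum_eq_equations:
  "\<Delta> = {s \<in> topspace pointwise_topology. \<forall>i\<in>A \<times> A. s (\<lambda>x. fst i x + snd i x) = s (fst i) + s (snd i)}
    \<inter> {s \<in> topspace pointwise_topology. \<forall>i\<in>A \<times> A. s (\<lambda>x. fst i x * snd i x) = s (fst i) * s (snd i)}
    \<inter> {s \<in> topspace pointwise_topology. \<forall>i\<in>UNIV \<times> A. s (\<lambda>x. fst i * snd i x) = fst i * s (snd i)}
    \<inter> {s \<in> topspace pointwise_topology. \<forall>_\<in>{()}. s (\<lambda>_. 1) = 1}"
  (is "\<Delta> = ?E")
proof
  show "\<Delta> \<subseteq> ?E"
    using spectrum_subset_topspace character_add character_mult character_scale character_one by auto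
  show "?E \<subseteq> \<Delta>"
    by (auto simp: gelfand_spectrum_def PiE_def extensional_def intro!: bexI[of _ "\<lambda>_. 1"])
qed

lemma closedin_spectrum: "closedin pointwise_topology \<Delta>"
proof -
  have ev: "u \<in> A \<Longrightarrow> continuous_map pointwise_topology euclidean (\<lambda>s. s u)" for u
    by (rule continuous_map_product_projection)
  have "closedin pointwise_topology
      {s \<in> topspace pointwise_topology. \<forall>i\<in>A \<times> A. s (\<lambda>x. fst i x + snd i x) = s (fst i) + s (snd i)}"
    by (rule closedin_equations[where f="\<lambda>i s. s (\<lambda>x. fst i x + snd i x)"])
      (auto intro!: continuous_intros ev add_closed)
  moreover have "closedin pointwise_topology
      {s \<in> topspace pointwise_topology. \<forall>i\<in>A \<times> A. s (\<lambda>x. fst i x * snd i x) = s (fst i) * s (snd i)}"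
    by (rule closedin_equations[where f="\<lambda>i s. s (\<lambda>x. fst i x * snd i x)"])
      (auto intro!: continuous_intros ev mult_closed)
  moreover have "closedin pointwise_topology
      {s \<in> topspace pointwise_topology. \<forall>i\<in>UNIV \<times> A. s (\<lambda>x. fst i * snd i x) = fst i * s (snd i)}"
    by (rule closedin_equations[where f="\<lambda>i s. s (\<lambda>x. fst i * snd i x)"])
      (auto intro!: continuous_intros ev scale_closed)
  moreover have "closedin pointwise_topology
      {s \<in> topspace pointwise_topology. \<forall>_\<in>{()}. s (\<lambda>_. 1) = 1}"
    by (rule closedin_equations[where f="\<lambda>_ s. s (\<lambda>_. 1)"]) (auto intro!: continuous_intros ev)
  ultimately show ?thesis unfolding spectrum_eq_equations by (intro closedin_Int)
qed

lemma compact_space_spectrum_topology: "compact_space X"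
proof -
  have "compactin pointwise_topology (PiE A (\<lambda>u. cball 0 (sup_bound u)))"
    by (simp add: compactin_PiE)
  moreover have "\<Delta> \<subseteq> PiE A (\<lambda>u. cball 0 (sup_bound u))"
    using character_norm_le norm_le_sup_bound spectrum_subset_topspace by (auto simp: PiE_def Pi_def)
  ultimately have "compactin pointwise_topology \<Delta>"
    using closedin_spectrum closed_compactin by blast
  then show ?thesis unfolding spectrum_topology_def by (rule compact_space_subtopology)
qed

subsection \<open>Urysohn separation and uniqueness of the M-measure\<close>

lemma openin_evaluation_Re_preimage:
  assumes "u \<in> A" and "open S"
  shows "openin X {s \<in> \<Delta>. Re (s u) \<in> S}"
proof -
  have "continuous_map euclidean euclideanreal Re"
    by (simp add: continuous_on_Re continuous_on_id)
  from continuous_map_compose[OF continuous_map_evaluation[OF assms(1)] this]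
  have "continuous_map X euclideanreal (\<lambda>s. Re (s u))" by (simp add: o_def)
  from openin_continuous_map_preimage[OF this, of S] show ?thesis using assms(2) by simp
qed

lemma exists_separating_element_two_points:
  assumes k: "k \<in> \<Delta>" and l: "l \<in> \<Delta>" and "k \<noteq> l"
  obtains v where "v \<in> real_elements" "\<And>s. s \<in> \<Delta> \<Longrightarrow> Re (s v) \<ge> 0"
    "Re (k v) = 0" "Re (l v) = 1"
proof -
  obtain u where u: "u \<in> A" "l u \<noteq> k u"
    using assms character_undefined by (metis ext)
  define c where "c = 1 / (cmod (l u - k u))\<^sup>2"
  define w where "w = (\<lambda>x. u x - k u)"
  define v where "v = (\<lambda>x. complex_of_real c * (w x * cnj (w x)))"
  have wA: "w \<in> A" unfolding w_def using u(1) by (intro diff_closed const_closed)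
  have "v \<in> A" unfolding v_def using wA by (intro scale_closed mult_closed cnj_closed)
  then have v: "v \<in> real_elements" by (simp add: real_elements_def v_def complex_mult_cnj)
  have Re_v: "Re (s v) = c * (cmod (s u - k u))\<^sup>2" if s: "s \<in> \<Delta>" for s
  proof -
    have "s v = of_real c * (s w * cnj (s w))"
      unfolding v_def
      by (simp only: character_scale[OF s mult_closed[OF wA cnj_closed[OF wA]]]
          character_mult[OF s wA cnj_closed[OF wA]] character_cnj[OF s wA])
    moreover have "s w = s u - k u"
      unfolding w_def using character_diff[OF s u(1)] character_const[OF s] by simp
    ultimately have "s v = of_real c * of_real ((cmod (s u - k u))\<^sup>2)"
      by (simp only: complex_norm_square)
    then show ?thesis by simp
  qed
  have "c > 0" unfolding c_def using u(2) by simp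
  then show thesis using u(2) by (intro that[OF v]) (auto simp: Re_v k l c_def)
qed

lemma obtain_real_element_comp:
  assumes w: "w \<in> real_elements" and f: "continuous_on UNIV f"
  obtains g where "g \<in> real_elements" "\<And>s. s \<in> \<Delta> \<Longrightarrow> Re (s g) = f (Re (s w))"
proof -
  note calc = continuous_calculus[OF w f]
  show thesis
  proof (rule that[OF calc(1)])
    fix s assume "s \<in> \<Delta>"
    then show "Re (s (\<lambda>x. complex_of_real (f (Re (w x))))) = f (Re (s w))"
      by (simp only: calc(2) Re_complex_of_real)
  qed
qed

lemma real_elements_sum:
  assumes F: "finite F" and G: "\<And>k. k \<in> F \<Longrightarrow> G k \<in> real_elements"
  shows "(\<lambda>x. \<Sum>k\<in>F. G k x) \<in> real_elements"
    and "s \<in> \<Delta> \<Longrightarrow> Re (s (\<lambda>x. \<Sum>k\<in>F. G k x)) = (\<Sum>k\<in>F. Re (s (G k)))"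
proof -
  have GA: "k \<in> F \<Longrightarrow> G k \<in> A" for k using G by (simp add: real_elements_def)
  show "(\<lambda>x. \<Sum>k\<in>F. G k x) \<in> real_elements"
    using sum_closed[OF F GA] G by (auto simp: real_elements_def Im_sum intro!: sum.neutral)
  show "Re (s (\<lambda>x. \<Sum>k\<in>F. G k x)) = (\<Sum>k\<in>F. Re (s (G k)))" if "s \<in> \<Delta>"
    using character_sum[OF that F GA] by (simp add: Re_sum)
qed

lemma real_elements_prod:
  assumes F: "finite F" and G: "\<And>k. k \<in> F \<Longrightarrow> G k \<in> real_elements"
  shows "(\<lambda>x. \<Prod>k\<in>F. G k x) \<in> real_elements"
    and "s \<in> \<Delta> \<Longrightarrow> Re (s (\<lambda>x. \<Prod>k\<in>F. G k x)) = (\<Prod>k\<in>F. Re (s (G k)))"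
proof -
  have GA: "k \<in> F \<Longrightarrow> G k \<in> A" for k using G by (simp add: real_elements_def)
  have "(\<Prod>k\<in>F. G k x) = of_real (\<Prod>k\<in>F. Re (G k x))" for x
    unfolding of_real_prod using G by (intro prod.cong) (auto simp: real_elements_def complex_eq_iff)
  then have "Im (\<Prod>k\<in>F. G k x) = 0" for x by (simp only: Im_complex_of_real)
  with prod_closed[OF F GA] show "(\<lambda>x. \<Prod>k\<in>F. G k x) \<in> real_elements"
    by (simp add: real_elements_def)
  assume s: "s \<in> \<Delta>"
  have "s (\<lambda>x. \<Prod>k\<in>F. G k x) = (\<Prod>k\<in>F. s (G k))" using character_prod[OF s F GA] .
  also have "\<dots> = of_real (\<Prod>k\<in>F. Re (s (G k)))"
    unfolding of_real_prod using character_real[OF s G] by (intro prod.cong) auto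
  finally show "Re (s (\<lambda>x. \<Prod>k\<in>F. G k x)) = (\<Prod>k\<in>F. Re (s (G k)))"
    by (simp only: Re_complex_of_real)
qed

lemma exists_element_point_compact:
  assumes k: "k \<in> \<Delta>" and L: "compactin X L" and kL: "k \<notin> L"
  obtains W where "W \<in> real_elements" "Re (k W) = 0" "\<And>s. s \<in> L \<Longrightarrow> 1/2 < Re (s W)"
proof -
  have LD: "L \<subseteq> \<Delta>" using compactin_subset_topspace[OF L] by simp
  have "\<exists>v. v \<in> real_elements \<and> (\<forall>s\<in>\<Delta>. Re (s v) \<ge> 0) \<and> Re (k v) = 0 \<and> Re (l v) = 1"
    if "l \<in> L" for l
  proof -
    have "l \<in> \<Delta>" "k \<noteq> l" using that LD kL by auto
    from exists_separating_element_two_points[OF k this(1,2)] show ?thesis by metis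
  qed
  then obtain V where V: "\<And>l. l \<in> L \<Longrightarrow> V l \<in> real_elements"
    and V_nonneg: "\<And>l s. l \<in> L \<Longrightarrow> s \<in> \<Delta> \<Longrightarrow> Re (s (V l)) \<ge> 0"
    and V_k: "\<And>l. l \<in> L \<Longrightarrow> Re (k (V l)) = 0" and V_l: "\<And>l. l \<in> L \<Longrightarrow> Re (l (V l)) = 1"
    by metis
  have VA: "l \<in> L \<Longrightarrow> V l \<in> A" for l using V by (simp add: real_elements_def)
  have "openin X {s \<in> \<Delta>. Re (s (V l)) \<in> {1/2<..}} \<and> l \<in> {s \<in> \<Delta>. Re (s (V l)) \<in> {1/2<..}}"
    if "l \<in> L" for l
    by (intro conjI openin_evaluation_Re_preimage[OF VA[OF that] open_greaterThan])
      (use V_l[OF that] that LD in auto)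
  then obtain F where F: "F \<subseteq> L" "finite F" "L \<subseteq> (\<Union>l\<in>F. {s \<in> \<Delta>. Re (s (V l)) \<in> {1/2<..}})"
    by (rule compactin_finite_subcover_pointwise[OF L])
  define W where "W = (\<lambda>x. \<Sum>l\<in>F. V l x)"
  have VF: "l \<in> F \<Longrightarrow> V l \<in> real_elements" for l using V F(1) by auto
  have W: "W \<in> real_elements" unfolding W_def by (rule real_elements_sum(1)[OF F(2) VF])
  have Re_W: "Re (s W) = (\<Sum>l\<in>F. Re (s (V l)))" if "s \<in> \<Delta>" for s
    unfolding W_def by (rule real_elements_sum(2)[OF F(2) VF that])
  have "Re (k W) = 0" unfolding Re_W[OF k] using V_k F(1) by (intro sum.neutral) auto
  moreover have "Re (s W) > 1/2" if s: "s \<in> L" for s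
  proof -
    obtain l where l: "l \<in> F" "Re (s (V l)) > 1/2" using s F(3) by auto
    have "Re (s (V l)) \<le> (\<Sum>l\<in>F. Re (s (V l)))"
      by (rule member_le_sum) (use l F V_nonneg LD s in auto)
    then show ?thesis using l(2) Re_W s LD by auto
  qed
  ultimately show thesis by (rule that[OF W])
qed

lemma exists_separating_element_point_compact:
  assumes k: "k \<in> \<Delta>" and L: "compactin X L" and kL: "k \<notin> L"
  obtains g where "g \<in> real_elements" "\<And>s. s \<in> \<Delta> \<Longrightarrow> 0 \<le> Re (s g) \<and> Re (s g) \<le> 1"
    "Re (k g) = 0" "\<And>s. s \<in> L \<Longrightarrow> Re (s g) = 1"
proof -
  obtain W where W: "W \<in> real_elements" "Re (k W) = 0" "\<And>s. s \<in> L \<Longrightarrow> 1/2 < Re (s W)"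
    using exists_element_point_compact[OF assms] by blast
  have "continuous_on UNIV (\<lambda>t::real. min 1 (max 0 (2 * t)))" by (intro continuous_intros)
  then obtain g where g: "g \<in> real_elements"
    "\<And>s. s \<in> \<Delta> \<Longrightarrow> Re (s g) = min 1 (max 0 (2 * Re (s W)))"
    using obtain_real_element_comp[OF W(1)] by blast
  have LD: "L \<subseteq> \<Delta>" using compactin_subset_topspace[OF L] by simp
  show thesis
  proof (rule that[OF g(1)])
    show "0 \<le> Re (s g) \<and> Re (s g) \<le> 1" if "s \<in> \<Delta>" for s using g(2)[OF that] by simp
    show "Re (k g) = 0" using g(2)[OF k] W(2) by simp
    show "Re (s g) = 1" if "s \<in> L" for s using g(2)[OF subsetD[OF LD that]] W(3)[OF that] by simp
  qed
qed

lemma exists_element_compact_compact: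
  assumes K: "compactin X K" and L: "compactin X L" and KL: "K \<inter> L = {}"
  obtains h where "h \<in> real_elements" "\<And>s. s \<in> K \<Longrightarrow> Re (s h) < 1/2" "\<And>s. s \<in> L \<Longrightarrow> Re (s h) = 1"
proof -
  have KD: "K \<subseteq> \<Delta>" and LD: "L \<subseteq> \<Delta>"
    using compactin_subset_topspace[OF K] compactin_subset_topspace[OF L] by simp_all
  have "\<exists>g. g \<in> real_elements \<and> (\<forall>s\<in>\<Delta>. 0 \<le> Re (s g) \<and> Re (s g) \<le> 1) \<and>
      Re (k g) = 0 \<and> (\<forall>s\<in>L. Re (s g) = 1)" if "k \<in> K" for k
  proof -
    have "k \<in> \<Delta>" "k \<notin> L" using that KD KL by auto
    from exists_separating_element_point_compact[OF this(1) L this(2)] show ?thesis by metis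
  qed
  then obtain G where G: "\<And>k. k \<in> K \<Longrightarrow> G k \<in> real_elements"
    and G_bounds: "\<And>k s. k \<in> K \<Longrightarrow> s \<in> \<Delta> \<Longrightarrow> 0 \<le> Re (s (G k)) \<and> Re (s (G k)) \<le> 1"
    and G_k: "\<And>k. k \<in> K \<Longrightarrow> Re (k (G k)) = 0" and G_L: "\<And>k s. k \<in> K \<Longrightarrow> s \<in> L \<Longrightarrow> Re (s (G k)) = 1"
    by metis
  have GA: "k \<in> K \<Longrightarrow> G k \<in> A" for k using G by (simp add: real_elements_def)
  have "openin X {s \<in> \<Delta>. Re (s (G k)) \<in> {..<1/2}} \<and> k \<in> {s \<in> \<Delta>. Re (s (G k)) \<in> {..<1/2}}"
    if "k \<in> K" for k
    by (intro conjI openin_evaluation_Re_preimage[OF GA[OF that] open_lessThan])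
      (use G_k[OF that] that KD in auto)
  then obtain F where F: "F \<subseteq> K" "finite F" "K \<subseteq> (\<Union>k\<in>F. {s \<in> \<Delta>. Re (s (G k)) \<in> {..<1/2}})"
    by (rule compactin_finite_subcover_pointwise[OF K])
  define h where "h = (\<lambda>x. \<Prod>k\<in>F. G k x)"
  have GF: "k \<in> F \<Longrightarrow> G k \<in> real_elements" for k using G F(1) by auto
  have h: "h \<in> real_elements" unfolding h_def by (rule real_elements_prod(1)[OF F(2) GF])
  have Re_h: "Re (s h) = (\<Prod>k\<in>F. Re (s (G k)))" if "s \<in> \<Delta>" for s
    unfolding h_def by (rule real_elements_prod(2)[OF F(2) GF that])
  have "Re (s h) < 1/2" if s: "s \<in> K" for s
  proof -
    obtain k where k: "k \<in> F" "Re (s (G k)) < 1/2" using s F(3) by auto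
    have "(\<Prod>j\<in>F. Re (s (G j))) = Re (s (G k)) * (\<Prod>j\<in>F - {k}. Re (s (G j)))"
      using prod.remove[OF F(2) k(1)] .
    also have "\<dots> \<le> Re (s (G k)) * 1"
      using G_bounds F(1) s KD k(1) by (intro mult_left_mono prod_le_1) auto
    finally show ?thesis using Re_h s KD k(2) by auto
  qed
  moreover have "Re (s h) = 1" if "s \<in> L" for s
    unfolding Re_h[OF subsetD[OF LD that]] using G_L F(1) that by (intro prod.neutral) auto
  ultimately show thesis by (rule that[OF h])
qed

lemma exists_urysohn_element:
  assumes K: "compactin X K" and L: "compactin X L" and KL: "K \<inter> L = {}"
  obtains w where "w \<in> real_elements" "\<And>s. s \<in> \<Delta> \<Longrightarrow> 0 \<le> Re (s w) \<and> Re (s w) \<le> 1"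
    "\<And>s. s \<in> K \<Longrightarrow> Re (s w) = 1" "\<And>s. s \<in> L \<Longrightarrow> Re (s w) = 0"
proof -
  obtain h where h: "h \<in> real_elements" "\<And>s. s \<in> K \<Longrightarrow> Re (s h) < 1/2" "\<And>s. s \<in> L \<Longrightarrow> Re (s h) = 1"
    using exists_element_compact_compact[OF assms] by blast
  have "continuous_on UNIV (\<lambda>t::real. min 1 (max 0 (2 - 2 * t)))" by (intro continuous_intros)
  then obtain w where w: "w \<in> real_elements"
    "\<And>s. s \<in> \<Delta> \<Longrightarrow> Re (s w) = min 1 (max 0 (2 - 2 * Re (s h)))"
    using obtain_real_element_comp[OF h(1)] by blast
  have KD: "K \<subseteq> \<Delta>" and LD: "L \<subseteq> \<Delta>"
    using compactin_subset_topspace[OF K] compactin_subset_topspace[OF L] by simp_all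
  show thesis
  proof (rule that[OF w(1)])
    show "0 \<le> Re (s w) \<and> Re (s w) \<le> 1" if "s \<in> \<Delta>" for s using w(2)[OF that] by simp
    show "Re (s w) = 1" if "s \<in> K" for s using w(2)[OF subsetD[OF KD that]] h(2)[OF that] by simp
    show "Re (s w) = 0" if "s \<in> L" for s using w(2)[OF subsetD[OF LD that]] h(3)[OF that] by simp
  qed
qed

context
  fixes \<beta> assumes \<beta>: "M_measure A \<beta>"
begin

lemma space_M_measure: "space \<beta> = \<Delta>"
  and emeasure_space_M_measure: "emeasure \<beta> (space \<beta>) = 1"
  and sets_M_measure: "sets \<beta> = sigma_sets \<Delta> {U. openin X U}"
  and inner_regular_M_measure:
    "F \<in> sets \<beta> \<Longrightarrow> emeasure \<beta> F = (SUP K\<in>{K. compactin X K \<and> K \<subseteq> F}. emeasure \<beta> K)"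
  and mean_value_eq_integral: "u \<in> A \<Longrightarrow> mean_value u = (LINT s|\<beta>. s u)"
  using \<beta> unfolding M_measure_def by blast+

lemma finite_measure_M_measure: "finite_measure \<beta>"
  using emeasure_space_M_measure by (intro finite_measureI) simp

lemma measure_spectrum_M_measure: "measure \<beta> \<Delta> = 1"
  using emeasure_space_M_measure space_M_measure by (simp add: measure_def)

interpretation finite_measure \<beta> by (rule finite_measure_M_measure)

lemma openin_in_sets: "openin X U \<Longrightarrow> U \<in> sets \<beta>"
  unfolding sets_M_measure by (rule sigma_sets.Basic) simp

lemma compactin_in_sets:
  assumes "compactin X K" shows "K \<in> sets \<beta>"
proof -
  have "closedin X K" by (rule compactin_imp_closedin[OF Hausdorff_space_spectrum_topology assms])
  then have "space \<beta> - (\<Delta> - K) \<in> sets \<beta>" by (intro sets.compl_sets openin_in_sets) (simp add: closedin_def)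
  moreover have "space \<beta> - (\<Delta> - K) = K"
    using compactin_subset_topspace[OF assms] space_M_measure by auto
  ultimately show ?thesis by simp
qed

lemma measurable_evaluation: "u \<in> A \<Longrightarrow> (\<lambda>s. s u) \<in> borel_measurable \<beta>"
proof (rule borel_measurableI)
  fix S :: "complex set" assume u: "u \<in> A" and "open S"
  then have "openin X {s \<in> topspace X. s u \<in> S}"
    by (intro openin_continuous_map_preimage[OF continuous_map_evaluation]) auto
  moreover have "(\<lambda>s. s u) -` S \<inter> space \<beta> = {s \<in> topspace X. s u \<in> S}"
    using space_M_measure by auto
  ultimately show "(\<lambda>s. s u) -` S \<inter> space \<beta> \<in> sets \<beta>" using openin_in_sets by simp
qed

lemma integrable_evaluation:
  assumes u: "u \<in> A" shows "integrable \<beta> (\<lambda>s. s u)"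
proof (rule integrable_const_bound[OF _ measurable_evaluation[OF u]])
  show "AE s in \<beta>. norm (s u) \<le> sup_bound u"
    using character_norm_le[OF _ u norm_le_sup_bound[OF u]] by (intro AE_I2) (simp add: space_M_measure)
qed

lemma obtain_compact_inner_approx:
  assumes F: "F \<in> sets \<beta>" and e: "0 < e"
  obtains L where "compactin X L" "L \<subseteq> F" "measure \<beta> F - e < measure \<beta> L"
proof (cases "measure \<beta> F < e")
  case True
  then show thesis using that[of "{}"] by simp
next
  case False
  then have "ennreal (measure \<beta> F - e) < emeasure \<beta> F"
    using e by (simp add: emeasure_eq_measure ennreal_lessI)
  also have "\<dots> = (SUP L\<in>{L. compactin X L \<and> L \<subseteq> F}. emeasure \<beta> L)"
    by (rule inner_regular_M_measure[OF F])
  finally obtain L where "compactin X L" "L \<subseteq> F" "ennreal (measure \<beta> F - e) < emeasure \<beta> L"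
    by (auto simp: less_SUP_iff)
  with False show thesis by (intro that) (simp_all add: emeasure_eq_measure ennreal_less_iff)
qed

lemma measure_le_Re_mean_value:
  assumes F: "F \<in> sets \<beta>" and w: "w \<in> A"
    and "\<And>s. s \<in> \<Delta> \<Longrightarrow> 0 \<le> Re (s w)" and "\<And>s. s \<in> F \<Longrightarrow> 1 \<le> Re (s w)"
  shows "measure \<beta> F \<le> Re (mean_value w)"
proof -
  have "measure \<beta> F = (LINT s|\<beta>. indicator F s)" using F by simp
  also have "\<dots> \<le> (LINT s|\<beta>. Re (s w))"
  proof (rule integral_mono)
    show "integrable \<beta> (indicator F :: _ \<Rightarrow> real)"
      using F by (intro integrable_real_indicator) (simp_all add: emeasure_eq_measure)
    show "integrable \<beta> (\<lambda>s. Re (s w))" using integrable_evaluation[OF w] by simp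
  qed (use assms sets.sets_into_space[OF F] in \<open>auto simp: space_M_measure indicator_def\<close>)
  also have "\<dots> = Re (mean_value w)"
    using mean_value_eq_integral[OF w] integral_Re[OF integrable_evaluation[OF w]] by simp
  finally show ?thesis .
qed

lemma Re_mean_value_le_measure:
  assumes F: "F \<in> sets \<beta>" and w: "w \<in> A"
    and "\<And>s. s \<in> \<Delta> \<Longrightarrow> Re (s w) \<le> 1" and "\<And>s. s \<in> \<Delta> - F \<Longrightarrow> Re (s w) \<le> 0"
  shows "Re (mean_value w) \<le> measure \<beta> F"
proof -
  have "Re (mean_value w) = (LINT s|\<beta>. Re (s w))"
    using mean_value_eq_integral[OF w] integral_Re[OF integrable_evaluation[OF w]] by simp
  also have "\<dots> \<le> (LINT s|\<beta>. indicator F s)"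
  proof (rule integral_mono)
    show "integrable \<beta> (indicator F :: _ \<Rightarrow> real)"
      using F by (intro integrable_real_indicator) (simp_all add: emeasure_eq_measure)
    show "integrable \<beta> (\<lambda>s. Re (s w))" using integrable_evaluation[OF w] by simp
  qed (use assms in \<open>auto simp: space_M_measure indicator_def\<close>)
  also have "\<dots> = measure \<beta> F" using F by simp
  finally show ?thesis .
qed

end

text \<open>Take a compact L inside the complement of K carrying almost all of its \<open>\<nu>\<close>-measure.
  A Urysohn element separating K from L lies between the indicators of K and of \<open>\<Delta> - L\<close>, and
  both measures integrate it to its mean value.\<close>
lemma M_measure_compact_le:
  assumes \<mu>: "M_measure A \<mu>" and \<nu>: "M_measure A \<nu>" and K: "compactin X K"
  shows "measure \<mu> K \<le> measure \<nu> K"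
proof (rule field_le_epsilon)
  fix e :: real assume e: "e > 0"
  interpret \<nu>: finite_measure \<nu> by (rule finite_measure_M_measure[OF \<nu>])
  have K\<nu>: "K \<in> sets \<nu>" and K\<mu>: "K \<in> sets \<mu>" using compactin_in_sets \<mu> \<nu> K by auto
  have C\<nu>: "\<Delta> - K \<in> sets \<nu>" using sets.compl_sets[OF K\<nu>] space_M_measure[OF \<nu>] by simp
  obtain L where L: "compactin X L" "L \<subseteq> \<Delta> - K"
    and L_big: "measure \<nu> (\<Delta> - K) - e < measure \<nu> L"
    by (rule obtain_compact_inner_approx[OF \<nu> C\<nu> e])
  have L\<nu>: "L \<in> sets \<nu>" by (rule compactin_in_sets[OF \<nu> L(1)])
  obtain w where w: "w \<in> real_elements" "\<And>s. s \<in> \<Delta> \<Longrightarrow> 0 \<le> Re (s w) \<and> Re (s w) \<le> 1"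
    "\<And>s. s \<in> K \<Longrightarrow> Re (s w) = 1" "\<And>s. s \<in> L \<Longrightarrow> Re (s w) = 0"
    using exists_urysohn_element[OF K L(1)] L(2) by blast
  have wA: "w \<in> A" using w(1) by (simp add: real_elements_def)
  have "measure \<mu> K \<le> Re (mean_value w)"
    by (rule measure_le_Re_mean_value[OF \<mu> K\<mu> wA]) (use w in auto)
  also have "\<dots> \<le> measure \<nu> (\<Delta> - L)"
    by (rule Re_mean_value_le_measure[OF \<nu> _ wA])
      (use w sets.compl_sets[OF L\<nu>] space_M_measure[OF \<nu>] in auto)
  also have "\<dots> = 1 - measure \<nu> L"
    using \<nu>.finite_measure_compl[OF L\<nu>] space_M_measure[OF \<nu>] measure_spectrum_M_measure[OF \<nu>]
    by simp
  also have "\<dots> < 1 - (measure \<nu> (\<Delta> - K) - e)" using L_big by simp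
  also have "\<dots> = measure \<nu> K + e"
    using \<nu>.finite_measure_compl[OF K\<nu>] space_M_measure[OF \<nu>] measure_spectrum_M_measure[OF \<nu>]
    by simp
  finally show "measure \<mu> K \<le> measure \<nu> K + e" by simp
qed

lemma M_measure_unique:
  assumes \<mu>: "M_measure A \<mu>" and \<nu>: "M_measure A \<nu>" and F: "F \<in> sets \<mu>"
  shows "emeasure \<mu> F = emeasure \<nu> F"
proof -
  interpret \<mu>: finite_measure \<mu> by (rule finite_measure_M_measure[OF \<mu>])
  interpret \<nu>: finite_measure \<nu> by (rule finite_measure_M_measure[OF \<nu>])
  have compact_eq: "emeasure \<mu> K = emeasure \<nu> K" if "compactin X K" for K
    using M_measure_compact_le[OF \<mu> \<nu> that] M_measure_compact_le[OF \<nu> \<mu> that]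
    by (simp add: \<mu>.emeasure_eq_measure \<nu>.emeasure_eq_measure)
  have "F \<in> sets \<nu>" using F sets_M_measure[OF \<mu>] sets_M_measure[OF \<nu>] by simp
  then show ?thesis
    using inner_regular_M_measure[OF \<mu> F] inner_regular_M_measure[OF \<nu>]
    by (auto simp: compact_eq intro!: SUP_cong)
qed

end

section \<open>Translations of the spectrum\<close>

locale translation_invariant_h_supralgebra = h_supralgebra +
  assumes translate_closed: "u \<in> A \<Longrightarrow> (\<lambda>x. u (x + y)) \<in> A"
    and uniformly_continuous_mem: "u \<in> A \<Longrightarrow> uniformly_continuous_on UNIV u"
begin

text \<open>Extensional like the characters themselves, so that it maps \<open>\<Delta>\<close> into \<open>\<Delta>\<close>.\<close>
definition translation :: "'a \<Rightarrow> (('a \<Rightarrow> complex) \<Rightarrow> complex) \<Rightarrow> ('a \<Rightarrow> complex) \<Rightarrow> complex" where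
  "translation y s = (\<lambda>u. if u \<in> A then s (\<lambda>x. u (x + y)) else undefined)"

lemma translation_apply: "u \<in> A \<Longrightarrow> translation y s u = s (\<lambda>x. u (x + y))"
  by (simp add: translation_def)

lemma translation_in_spectrum:
  assumes s: "s \<in> \<Delta>" shows "translation y s \<in> \<Delta>"
  using character_add[OF s] character_mult[OF s] character_scale[OF s] character_one[OF s]
  by (auto simp: gelfand_spectrum_def translation_def translate_closed
      intro!: bexI[of _ "\<lambda>_. 1"])

lemma translation_add: "s \<in> \<Delta> \<Longrightarrow> translation x (translation y s) = translation (x + y) s"
  by (auto simp: translation_def translate_closed add_ac)

lemma translation_zero: "s \<in> \<Delta> \<Longrightarrow> translation 0 s = s"
  by (auto simp: translation_def character_undefined)

lemma translation_inverse: "s \<in> \<Delta> \<Longrightarrow> translation (- y) (translation y s) = s"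
  by (simp add: translation_add translation_zero)

lemma continuous_map_translation: "continuous_map X X (translation y)"
proof (rule continuous_map_into_spectrum_topology)
  show "continuous_map X pointwise_topology (translation y)"
    unfolding continuous_map_componentwise
    using continuous_map_evaluation[OF translate_closed] by (auto simp: translation_def extensional_def)
qed (auto simp: translation_in_spectrum)

lemma homeomorphic_map_translation: "homeomorphic_map X X (translation y)"
  unfolding homeomorphic_map_maps homeomorphic_maps_def
  using translation_inverse[of _ y] translation_inverse[of _ "- y"]
  by (intro exI[of _ "translation (- y)"]) (auto simp: continuous_map_translation)

text \<open>Here uniform continuity of the elements of A enters: it makes \<open>y \<mapsto> u(\<cdot> + y)\<close>
  continuous for the sup norm, which dominates all characters.\<close>
lemma continuous_map_evaluation_translate:
  assumes u: "u \<in> A"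
  shows "continuous_map (prod_topology euclidean X) euclidean (\<lambda>(y, s). s (\<lambda>x. u (x + y)))"
proof -
  have "continuous_map (prod_topology euclidean X) Met_TC.mtopology (\<lambda>(y, s). s (\<lambda>x. u (x + y)))"
    unfolding Met_TC.continuous_map_to_metric
  proof (intro ballI allI impI)
    fix p :: "'a \<times> (('a \<Rightarrow> complex) \<Rightarrow> complex)" and e :: real
    assume p: "p \<in> topspace (prod_topology euclidean X)" and e: "e > 0"
    obtain y0 s0 where p0: "p = (y0, s0)" and s0: "s0 \<in> \<Delta>" using p by auto
    obtain d where d: "d > 0" and ud: "\<And>a b. dist a b < d \<Longrightarrow> dist (u a) (u b) < e / 2"
      using uniformly_continuous_mem[OF u] e unfolding uniformly_continuous_on_def
      by (metis half_gt_zero UNIV_I)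
    define V where "V = {s \<in> topspace X. s (\<lambda>x. u (x + y0)) \<in> ball (s0 (\<lambda>x. u (x + y0))) (e / 2)}"
    have "openin X V"
      unfolding V_def
      by (rule openin_continuous_map_preimage[OF continuous_map_evaluation]) (auto simp: u translate_closed)
    moreover have "p \<in> ball y0 d \<times> V" using p0 s0 d e by (simp add: V_def)
    moreover have "(\<lambda>(y, s). s (\<lambda>x. u (x + y))) q \<in> Met_TC.mball ((\<lambda>(y, s). s (\<lambda>x. u (x + y))) p) e"
      if q: "q \<in> ball y0 d \<times> V" for q
    proof -
      obtain y s where q0: "q = (y, s)" and s: "s \<in> \<Delta>" and y: "dist y0 y < d"
        and sV: "dist (s0 (\<lambda>x. u (x + y0))) (s (\<lambda>x. u (x + y0))) < e / 2"
        using q by (auto simp: V_def)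
      have "dist (u (x + y)) (u (x + y0)) \<le> e / 2" for x
        using ud[of "x + y" "x + y0"] y by (simp add: dist_norm norm_minus_commute)
      then have "dist (s (\<lambda>x. u (x + y))) (s (\<lambda>x. u (x + y0))) \<le> e / 2"
        by (rule dist_character_le[OF s translate_closed[OF u] translate_closed[OF u]])
      then show ?thesis
        using sV dist_triangle[of "s0 (\<lambda>x. u (x + y0))" "s (\<lambda>x. u (x + y))" "s (\<lambda>x. u (x + y0))"]
        by (simp add: q0 p0 dist_commute)
    qed
    ultimately show "\<exists>U. openin (prod_topology euclidean X) U \<and> p \<in> U \<and>
        (\<forall>q\<in>U. (\<lambda>(y, s). s (\<lambda>x. u (x + y))) q \<in> Met_TC.mball ((\<lambda>(y, s). s (\<lambda>x. u (x + y))) p) e)"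
      by (intro exI[of _ "ball y0 d \<times> V"]) (simp add: openin_prod_Times_iff)
  qed
  then show ?thesis by simp
qed

lemma continuous_map_translation_joint:
  "continuous_map (prod_topology euclidean X) X (\<lambda>(y, s). translation y s)"
proof (rule continuous_map_into_spectrum_topology)
  have "continuous_map (prod_topology euclidean X) euclidean (\<lambda>(y, s). translation y s u)"
    if "u \<in> A" for u
    using continuous_map_evaluation_translate[OF that] by (simp add: translation_apply[OF that] case_prod_unfold)
  then show "continuous_map (prod_topology euclidean X) pointwise_topology (\<lambda>(y, s). translation y s)"
    unfolding continuous_map_componentwise
    by (auto simp: translation_def extensional_def case_prod_unfold)
qed (auto simp: translation_in_spectrum)

lemma dynamical_system_translation: "dynamical_system X translation"
  unfolding dynamical_system_def
  using compact_space_spectrum_topology translation_in_spectrum translation_zero translation_add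
    continuous_map_translation_joint
  by auto

lemma mean_value_translate:
  assumes u: "u \<in> A" shows "mean_value (\<lambda>x. u (x + y)) = mean_value u"
proof -
  obtain m where m: "has_mean_value u m" using has_mean_value_ex[OF u] by blast
  obtain m' where m': "has_mean_value (\<lambda>x. u (x + y)) m'"
    using has_mean_value_ex[OF translate_closed[OF u]] by blast
  have "m' = m"
    using has_mean_value_translate[OF borel_measurable_continuous_onI[OF continuous_on_mem[OF u]]
        norm_le_sup_bound[OF u] m m'] .
  then show ?thesis using mean_value_eqI[OF m] mean_value_eqI[OF m'] by simp
qed

lemma translation_vimage_eq_image:
  assumes "F \<subseteq> \<Delta>" shows "translation (- y) -` F \<inter> \<Delta> = translation y ` F"
proof
  show "translation (- y) -` F \<inter> \<Delta> \<subseteq> translation y ` F"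
    using translation_inverse[of _ "- y"] by (force simp: image_iff)
  show "translation y ` F \<subseteq> translation (- y) -` F \<inter> \<Delta>"
    using translation_inverse[of _ y] translation_in_spectrum assms by auto
qed

context
  fixes \<beta> assumes \<beta>: "M_measure A \<beta>"
begin

lemma measurable_translation: "translation y \<in> measurable \<beta> \<beta>"
proof (rule measurable_sigma_sets[OF sets_M_measure[OF \<beta>]])
  show "{U. openin X U} \<subseteq> Pow \<Delta>" using openin_subset by fastforce
  show "translation y \<in> space \<beta> \<rightarrow> \<Delta>" using translation_in_spectrum space_M_measure[OF \<beta>] by auto
  fix U assume "U \<in> {U. openin X U}"
  then have "openin X {s \<in> topspace X. translation y s \<in> U}"
    by (intro openin_continuous_map_preimage[OF continuous_map_translation]) simp
  moreover have "translation y -` U \<inter> space \<beta> = {s \<in> topspace X. translation y s \<in> U}"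
    using space_M_measure[OF \<beta>] by auto
  ultimately show "translation y -` U \<inter> space \<beta> \<in> sets \<beta>" using openin_in_sets[OF \<beta>] by simp
qed

lemma sets_translation_image: "F \<in> sets \<beta> \<Longrightarrow> translation y ` F \<in> sets \<beta>"
  using measurable_sets[OF measurable_translation[of "- y"]] translation_vimage_eq_image[of F y]
    sets.sets_into_space space_M_measure[OF \<beta>]
  by metis

lemma emeasure_distr_translation:
  "F \<in> sets \<beta> \<Longrightarrow> emeasure (distr \<beta> \<beta> (translation (- y))) F = emeasure \<beta> (translation y ` F)"
  using emeasure_distr[OF measurable_translation] translation_vimage_eq_image[of F y]
    sets.sets_into_space space_M_measure[OF \<beta>]
  by metis

lemma M_measure_distr_translation: "M_measure A (distr \<beta> \<beta> (translation (- y)))"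
  (is "M_measure A ?\<nu>")
proof -
  have "translation y ` \<Delta> = \<Delta>"
    using translation_vimage_eq_image[of \<Delta> y] translation_in_spectrum by auto
  then have "emeasure ?\<nu> (space ?\<nu>) = emeasure \<beta> (space \<beta>)"
    using emeasure_distr_translation[OF sets.top, of y] by (simp add: space_M_measure[OF \<beta>])
  moreover have "emeasure ?\<nu> F = (SUP K\<in>{K. compactin X K \<and> K \<subseteq> F}. emeasure ?\<nu> K)"
    if F: "F \<in> sets ?\<nu>" for F
  proof -
    have F\<beta>: "F \<in> sets \<beta>" and "F \<subseteq> \<Delta>"
      using F sets.sets_into_space space_M_measure[OF \<beta>] by auto
    have "emeasure ?\<nu> F = emeasure \<beta> (translation y ` F)" by (rule emeasure_distr_translation[OF F\<beta>])
    also have "\<dots> = (SUP K\<in>{K. compactin X K \<and> K \<subseteq> translation y ` F}. emeasure \<beta> K)"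
      by (rule inner_regular_M_measure[OF \<beta> sets_translation_image[OF F\<beta>]])
    also have "\<dots> = (SUP K\<in>{K. compactin X K \<and> K \<subseteq> F}. emeasure \<beta> (translation y ` K))"
      using compactin_subsets_image[OF homeomorphic_map_translation[of y], of F] \<open>F \<subseteq> \<Delta>\<close>
      by (simp add: image_comp)
    also have "\<dots> = (SUP K\<in>{K. compactin X K \<and> K \<subseteq> F}. emeasure ?\<nu> K)"
      by (rule SUP_cong) (auto simp: emeasure_distr_translation compactin_in_sets[OF \<beta>])
    finally show ?thesis .
  qed
  moreover have "mean_value u = (LINT s|?\<nu>. s u)" if u: "u \<in> A" for u
  proof -
    have "(LINT s|?\<nu>. s u) = (LINT s|\<beta>. translation (- y) s u)"
      by (rule integral_distr[OF measurable_translation measurable_evaluation[OF \<beta> u]])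
    also have "\<dots> = (LINT s|\<beta>. s (\<lambda>x. u (x + - y)))" by (simp add: translation_apply[OF u])
    also have "\<dots> = mean_value (\<lambda>x. u (x + - y))"
      by (rule mean_value_eq_integral[OF \<beta> translate_closed[OF u], symmetric])
    also have "\<dots> = mean_value u" by (rule mean_value_translate[OF u])
    finally show ?thesis by simp
  qed
  ultimately show ?thesis
    using space_M_measure[OF \<beta>] sets_M_measure[OF \<beta>] emeasure_space_M_measure[OF \<beta>]
    unfolding M_measure_def by simp
qed

lemma emeasure_translation_image: "F \<in> sets \<beta> \<Longrightarrow> emeasure \<beta> (translation y ` F) = emeasure \<beta> F"
  using emeasure_distr_translation[of F y] M_measure_unique[OF M_measure_distr_translation[of y] \<beta>, of F]
  by simp

end

end

theorem theorem2p2: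
  fixes A :: "('a::euclidean_space \<Rightarrow> complex) set"
  assumes "H_supralgebra A"
    and "\<forall>u\<in>A. \<forall>y. (\<lambda>x. u (x + y)) \<in> A"
    and "\<forall>u\<in>A. uniformly_continuous_on UNIV u"
  shows "\<exists>T :: 'a \<Rightarrow> (('a \<Rightarrow> complex) \<Rightarrow> complex) \<Rightarrow> (('a \<Rightarrow> complex) \<Rightarrow> complex).
           (\<forall>y. homeomorphic_map (spectrum_topology A) (spectrum_topology A) (T y)) \<and>
           (\<forall>y. \<forall>u\<in>A. \<forall>s\<in>gelfand_spectrum A. s (\<lambda>x. u (x + y)) = T y s u) \<and>
           dynamical_system (spectrum_topology A) T \<and>
           (\<forall>\<beta>. M_measure A \<beta> \<longrightarrow>
              (\<forall>y. \<forall>F\<in>sets \<beta>. emeasure \<beta> (T y ` F) = emeasure \<beta> F))"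
proof -
  interpret translation_invariant_h_supralgebra A
    using assms by unfold_locales auto
  show ?thesis
    using homeomorphic_map_translation translation_apply dynamical_system_translation
      emeasure_translation_image
    by (intro exI[of _ translation]) auto
qed

end
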